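(* Let $\mathbf{k}$ and $\mathbf{l}$ be indices. If at least one of $\mathbf{k}$ and $\mathbf{l}$ is admissible, then $E_{\mathbf{k}} \,\mathrm{sh}_{\hbar}\, E_{\mathbf{l}}$ belongs to $\mathfrak{e}$. If both $\mathbf{k}$ and $\mathbf{l}$ are admissible, then $E_{\mathbf{k}} \,\mathrm{sh}_{\hbar}\, E_{\mathbf{l}}$ belongs to $\mathfrak{e}^{0}$.
   Context: Indices: an index is a finite (possibly empty) tuple $\mathbf k=(k_1,\dots,k_r)$ of positive integers; admissible if empty or $k_r\ge2$; $I$ = set of indices, $I_0$ = set of admissible indices. Let $\mathcal{C}=\mathbb{Q}[\hbar]$ ($\hbar$ formal), $\mathfrak{H}=\mathcal{C}\langle a,b\rangle$ the non-commutative polynomial ring. For $k\ge1$, $g_k=ba^k$, $e_k=b(a+\hbar)a^{k-1}$. Shuffle product $\mathrm{sh}_\hbar$ on $\mathfrak H$: $\mathcal C$-bilinear with $w\,\mathrm{sh}_\hbar\,1=1\,\mathrm{sh}_\hbar\,w=w$, $wa\,\mathrm{sh}_\hbar\,w'a=(wa\,\mathrm{sh}_\hbar\,w'+w\,\mathrm{sh}_\hbar\,w'a+\hbar(w\,\mathrm{sh}_\hbar\,w'))a$, $wb\,\mathrm{sh}_\hbar\,w'=w\,\mathrm{sh}_\hbar\,w'b=(w\,\mathrm{sh}_\hbar\,w')b$. For $m\ge0$, $E_{1^m}=\frac1{(m+1)!}\sum_{j=0}^m g_1^{\mathrm{sh}_\hbar j}\,\mathrm{sh}_\hbar\,e_1^{\mathrm{sh}_\hbar(m-j)}$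 (shuffle powers, $u^{\mathrm{sh}_\hbar 0}=1$). Each non-empty index is uniquely $\mathbf k=(1^{s_0},t_1+2,1^{s_1},\dots,t_r+2,1^{s_r})$ with $r,s_i,t_i\ge0$ ($1^s$ = $s$ consecutive ones); $E_{\mathbf k}=E_{1^{s_0}}e_{t_1+2}E_{1^{s_1}}\cdots e_{t_r+2}E_{1^{s_r}}$, $E_\varnothing=1$. $\mathfrak e=\bigoplus_{\mathbf k\in I}\mathcal C E_{\mathbf k}$ and $\mathfrak e^0=\sum_{\mathbf k\in I_0}\mathcal C E_{\mathbf k}$. *)

theory Defs
  imports "HOL-Library.Poly_Mapping" "HOL-Computational_Algebra.Polynomial"
begin

type_synonym coef = "rat poly"

definition hbar :: coef where "hbar = [:0, 1:]"

text \<open>Letters a, b; words are lists of letters; elements of the non-commutative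
  polynomial ring H = C<a,b> are finitely supported functions words => C.\<close>
datatype letter = A | B

type_synonym nc = "letter list \<Rightarrow>\<^sub>0 coef"

definition word :: "letter list \<Rightarrow> nc" where
  "word w = Poly_Mapping.single w 1"

definition nc_one :: nc where "nc_one = word []"

definition scal :: "coef \<Rightarrow> nc \<Rightarrow> nc" where
  "scal c p = (\<Sum>u\<in>Poly_Mapping.keys p. Poly_Mapping.single u (c * Poly_Mapping.lookup p u))"

definition ncmult :: "nc \<Rightarrow> nc \<Rightarrow> nc" where
  "ncmult p q = (\<Sum>u\<in>Poly_Mapping.keys p. \<Sum>v\<in>Poly_Mapping.keys q. Poly_Mapping.single (u @ v) (Poly_Mapping.lookup p u * Poly_Mapping.lookup q v))"

definition rmul :: "nc \<Rightarrow> letter \<Rightarrow> nc" where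
  "rmul p x = ncmult p (word [x])"

function shw :: "letter list \<Rightarrow> letter list \<Rightarrow> nc" where
  "shw u v =
    (if u = [] then word v
     else if v = [] then word u
     else if last u = B then rmul (shw (butlast u) v) B
     else if last v = B then rmul (shw u (butlast v)) B
     else rmul (shw u (butlast v) + shw (butlast u) v
                + scal hbar (shw (butlast u) (butlast v))) A)"
  by pat_completeness auto
termination
  by (relation "measure (\<lambda>(u, v). length u + length v)") (auto simp: Suc_le_eq)

definition sh :: "nc \<Rightarrow> nc \<Rightarrow> nc" where
  "sh p q = (\<Sum>u\<in>Poly_Mapping.keys p. \<Sum>v\<in>Poly_Mapping.keys q. scal (Poly_Mapping.lookup p u * Poly_Mapping.lookup q v) (shw u v))"

fun shpow :: "nc \<Rightarrow> nat \<Rightarrow> nc" where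
  "shpow p 0 = nc_one"
| "shpow p (Suc n) = sh p (shpow p n)"

definition g :: "nat \<Rightarrow> nc" where
  "g k = word (B # replicate k A)"

definition e :: "nat \<Rightarrow> nc" where
  "e k = ncmult (word [B]) (ncmult (word [A] + scal hbar nc_one) (word (replicate (k - 1) A)))"

definition E1 :: "nat \<Rightarrow> nc" where
  "E1 m = scal [: 1 / of_nat (fact (m + 1)) :]
            (\<Sum>j\<le>m. sh (shpow (g 1) j) (shpow (e 1) (m - j)))"

text \<open>E_k for an index k = (1^{s0}, t1+2, 1^{s1}, ..., tr+2, 1^{sr});
  the first argument of Eaux counts the current run of ones.\<close>
fun Eaux :: "nat \<Rightarrow> nat list \<Rightarrow> nc" where
  "Eaux s [] = E1 s"
| "Eaux s (k # ks) = (if k = 1 then Eaux (Suc s) ks else ncmult (ncmult (E1 s) (e k)) (Eaux 0 ks))"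

definition Eidx :: "nat list \<Rightarrow> nc" where
  "Eidx ks = Eaux 0 ks"

definition is_index :: "nat list \<Rightarrow> bool" where
  "is_index ks \<longleftrightarrow> (\<forall>k\<in>set ks. 0 < k)"

definition admissible :: "nat list \<Rightarrow> bool" where
  "admissible ks \<longleftrightarrow> is_index ks \<and> (ks = [] \<or> 2 \<le> last ks)"

definition E_span :: "nat list set \<Rightarrow> nc set" where
  "E_span S = {x. \<exists>F c. finite F \<and> F \<subseteq> S \<and> x = (\<Sum>k\<in>F. scal (c k) (Eidx k))}"

definition frak_e :: "nc set" where "frak_e = E_span {ks. is_index ks}"
definition frak_e0 :: "nc set" where "frak_e0 = E_span {ks. admissible ks}"

end

theory Submission
  imports Defs
begin

text \<open>Send words into \<open>H\<close> by the map \<open>F\<close> with \<open>F(w a) = F(w) a\<close> and \<open>F(w b) = J(F w) b (a + \<hbar>)\<close>,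
  where \<open>J\<close> divides a word ending in exactly \<open>t\<close> letters \<open>b\<close> by \<open>t + 1\<close>. Trailing \<open>b\<close>'s pass
  through the \<open>\<hbar>\<close>-shuffle, so \<open>p \<mapsto> J(p) b\<close> behaves like integration and satisfies an
  integration-by-parts rule; this makes \<open>F\<close> a homomorphism from the shuffle in which \<open>b\<close> is an
  ordinary letter to the \<open>\<hbar>\<close>-shuffle. Expanding \<open>F(b^s)\<close> in powers of \<open>\<hbar>\<close> gives
  \<open>E_(1^s) = J F(b^s)\<close>, hence \<open>E_k = J F(w_k)\<close> for \<open>w_k = b a^(k_1 - 1) b a^(k_2 - 1) \<dots>\<close>.
  If \<open>k\<close> is admissible, \<open>F(w_k)\<close> has no trailing \<open>b\<close> and \<open>J\<close> moves across the shuffle, so the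
  shuffle of \<open>E_k\<close> and \<open>E_l\<close> is \<open>J F\<close> applied to the shuffle of \<open>w_k\<close> and \<open>w_l\<close>. Every word in
  the latter starts with \<open>b\<close>, and ends with \<open>a\<close> if \<open>w_k\<close> and \<open>w_l\<close> do; such words are exactly
  the \<open>w_m\<close> of indices \<open>m\<close>, admissible ones in the second case.\<close>

section \<open>Linear maps on the word algebra\<close>

lemma lookup_scal [simp]: "Poly_Mapping.lookup (scal c p) w = c * Poly_Mapping.lookup p w"
proof -
  have "Poly_Mapping.lookup (scal c p) w =
        (\<Sum>u\<in>Poly_Mapping.keys p. (if u = w then c * Poly_Mapping.lookup p u else 0))"
    unfolding scal_def lookup_sum lookup_single by (intro sum.cong) (auto simp: when_def)
  also have "\<dots> = c * Poly_Mapping.lookup p w"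
    by (simp add: in_keys_iff)
  finally show ?thesis .
qed

lemma scal_add_right: "scal c (p + q) = scal c p + scal c q"
  by (rule poly_mapping_eqI) (simp add: lookup_add algebra_simps)

lemma scal_add_left: "scal (c + d) p = scal c p + scal d p"
  by (rule poly_mapping_eqI) (simp add: lookup_add algebra_simps)

lemma scal_scal: "scal c (scal d p) = scal (c * d) p"
  by (rule poly_mapping_eqI) (simp add: algebra_simps)

lemma scal_zero_left [simp]: "scal 0 p = 0"
  by (rule poly_mapping_eqI) simp

lemma scal_zero_right [simp]: "scal c 0 = 0"
  by (rule poly_mapping_eqI) simp

lemma scal_one [simp]: "scal 1 p = p"
  by (rule poly_mapping_eqI) simp

lemma scal_sum_right: "scal c (sum f S) = (\<Sum>x\<in>S. scal c (f x))"
  by (induction S rule: infinite_finite_induct) (auto simp: scal_add_right)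

lemma scal_sum_left: "scal (sum f S) p = (\<Sum>x\<in>S. scal (f x) p)"
  by (induction S rule: infinite_finite_induct) (auto simp: scal_add_left)

lemma scal_single: "scal c (Poly_Mapping.single w d) = Poly_Mapping.single w (c * d)"
  by (rule poly_mapping_eqI) (simp add: lookup_single when_def)

lemma scal_word: "scal c (word u) = Poly_Mapping.single u c"
  by (simp add: word_def scal_single)

lemma keys_scal_subset: "Poly_Mapping.keys (scal c p) \<subseteq> Poly_Mapping.keys p"
  by (auto simp: in_keys_iff)

definition lin :: "(letter list \<Rightarrow> nc) \<Rightarrow> nc \<Rightarrow> nc" where
  "lin f p = (\<Sum>u\<in>Poly_Mapping.keys p. scal (Poly_Mapping.lookup p u) (f u))"

lemma lin_superset:
  assumes "finite S" "Poly_Mapping.keys p \<subseteq> S"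
  shows "lin f p = (\<Sum>u\<in>S. scal (Poly_Mapping.lookup p u) (f u))"
  unfolding lin_def by (rule sum.mono_neutral_left) (use assms in \<open>auto simp: in_keys_iff\<close>)

lemma lin_add: "lin f (p + q) = lin f p + lin f q"
proof -
  let ?S = "Poly_Mapping.keys p \<union> Poly_Mapping.keys q"
  have "lin f (p + q) = (\<Sum>u\<in>?S. scal (Poly_Mapping.lookup (p + q) u) (f u))"
    by (rule lin_superset) (auto simp: keys_add)
  also have "\<dots> = (\<Sum>u\<in>?S. scal (Poly_Mapping.lookup p u) (f u))
                 + (\<Sum>u\<in>?S. scal (Poly_Mapping.lookup q u) (f u))"
    by (simp add: lookup_add scal_add_left sum.distrib)
  also have "\<dots> = lin f p + lin f q"
    by (simp add: lin_superset[symmetric])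
  finally show ?thesis .
qed

lemma lin_scal: "lin f (scal c p) = scal c (lin f p)"
proof -
  have "lin f (scal c p) = (\<Sum>u\<in>Poly_Mapping.keys p. scal (Poly_Mapping.lookup (scal c p) u) (f u))"
    by (rule lin_superset) (auto simp: in_keys_iff)
  also have "\<dots> = scal c (lin f p)"
    by (simp add: lin_def scal_sum_right scal_scal)
  finally show ?thesis .
qed

lemma lin_word [simp]: "lin f (word u) = f u"
  by (simp add: lin_def word_def)

lemma lin_cong: "(\<And>u. u \<in> Poly_Mapping.keys p \<Longrightarrow> f u = h u) \<Longrightarrow> lin f p = lin h p"
  by (simp add: lin_def)

lemma lin_fun_add: "lin (\<lambda>u. f u + h u) p = lin f p + lin h p"
  by (simp add: lin_def scal_add_right sum.distrib)

lemma lin_fun_scal: "lin (\<lambda>u. scal c (f u)) p = scal c (lin f p)"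
  by (simp add: lin_def scal_scal scal_sum_right mult.commute)

lemma lin_fun_zero [simp]: "lin (\<lambda>u. 0) p = 0"
  by (simp add: lin_def)

lemma lin_word_eq [simp]: "lin word p = p"
proof (rule poly_mapping_eqI)
  fix w
  have "Poly_Mapping.lookup (lin word p) w =
     (\<Sum>u\<in>Poly_Mapping.keys p. (if u = w then Poly_Mapping.lookup p u else 0))"
    unfolding lin_def lookup_sum by (intro sum.cong) (auto simp: word_def lookup_single when_def)
  also have "\<dots> = Poly_Mapping.lookup p w"
    by (simp add: in_keys_iff)
  finally show "Poly_Mapping.lookup (lin word p) w = Poly_Mapping.lookup p w" .
qed

definition linear_nc :: "(nc \<Rightarrow> nc) \<Rightarrow> bool" where
  "linear_nc L \<longleftrightarrow> (\<forall>p q. L (p + q) = L p + L q) \<and> (\<forall>c p. L (scal c p) = scal c (L p))"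

lemma linear_ncI:
  "(\<And>p q. L (p + q) = L p + L q) \<Longrightarrow> (\<And>c p. L (scal c p) = scal c (L p)) \<Longrightarrow> linear_nc L"
  by (simp add: linear_nc_def)

lemma linear_nc_add: "linear_nc L \<Longrightarrow> L (p + q) = L p + L q"
  by (simp add: linear_nc_def)

lemma linear_nc_scal: "linear_nc L \<Longrightarrow> L (scal c p) = scal c (L p)"
  by (simp add: linear_nc_def)

lemma linear_nc_zero: "linear_nc L \<Longrightarrow> L 0 = 0"
  by (metis linear_nc_scal scal_zero_left)

lemma linear_nc_sum: "linear_nc L \<Longrightarrow> L (sum f S) = (\<Sum>x\<in>S. L (f x))"
  by (induction S rule: infinite_finite_induct) (auto simp: linear_nc_zero linear_nc_add)

lemma lin_linear_nc: "linear_nc L \<Longrightarrow> L (lin f p) = lin (\<lambda>u. L (f u)) p"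
  by (simp add: lin_def linear_nc_sum linear_nc_scal)

lemma linear_nc_ext:
  assumes "linear_nc L" "linear_nc M" "\<And>u. L (word u) = M (word u)"
  shows "L p = M p"
  using lin_linear_nc[OF assms(1), of word p] lin_linear_nc[OF assms(2), of word p]
  by (simp add: assms(3))

lemma linear_nc_lin [simp]: "linear_nc (lin f)"
  by (simp add: linear_nc_def lin_add lin_scal)

lemma linear_nc_id [intro]: "linear_nc (\<lambda>p. p)"
  by (simp add: linear_nc_def)

lemma linear_nc_comp: "linear_nc L \<Longrightarrow> linear_nc M \<Longrightarrow> linear_nc (\<lambda>p. L (M p))"
  by (simp add: linear_nc_def)

lemma linear_nc_plus [intro]: "linear_nc L \<Longrightarrow> linear_nc M \<Longrightarrow> linear_nc (\<lambda>p. L p + M p)"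
  by (simp add: linear_nc_def scal_add_right algebra_simps)

lemma linear_nc_scal_comp [intro]: "linear_nc L \<Longrightarrow> linear_nc (\<lambda>p. scal c (L p))"
  by (simp add: linear_nc_def scal_add_right scal_scal mult.commute)

definition bil :: "(letter list \<Rightarrow> letter list \<Rightarrow> nc) \<Rightarrow> nc \<Rightarrow> nc \<Rightarrow> nc" where
  "bil f p q = lin (\<lambda>u. lin (f u) q) p"

lemma linear_nc_bil_left: "linear_nc (\<lambda>p. bil f p q)"
  by (simp add: bil_def)

lemma linear_nc_bil_right: "linear_nc (\<lambda>q. bil f p q)"
  by (rule linear_ncI) (simp_all add: bil_def lin_add lin_scal lin_fun_add lin_fun_scal)

lemma bil_word [simp]: "bil f (word u) (word v) = f u v"
  by (simp add: bil_def)

lemma ncmult_eq_bil: "ncmult p q = bil (\<lambda>u v. word (u @ v)) p q"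
  unfolding ncmult_def bil_def lin_def by (simp add: scal_sum_right scal_scal scal_word scal_single)

lemma sh_eq_bil: "sh p q = bil shw p q"
  unfolding sh_def bil_def lin_def by (simp add: scal_sum_right scal_scal)

lemma bilinear_nc_ext:
  assumes "\<And>q. linear_nc (\<lambda>p. L p q)" "\<And>q. linear_nc (\<lambda>p. M p q)"
    and "\<And>p. linear_nc (\<lambda>q. L p q)" "\<And>p. linear_nc (\<lambda>q. M p q)"
    and "\<And>u v. L (word u) (word v) = M (word u) (word v)"
  shows "L p q = M p q"
proof -
  have "L (word u) q = M (word u) q" for u
    by (rule linear_nc_ext[OF assms(3,4)]) (simp add: assms(5))
  then show ?thesis
    by (rule linear_nc_ext[OF assms(1,2)])
qed

lemma linear_nc_sh_left [intro]: "linear_nc L \<Longrightarrow> linear_nc (\<lambda>p. sh (L p) q)"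
  unfolding sh_eq_bil by (rule linear_nc_comp[OF linear_nc_bil_left])

lemma linear_nc_sh_right [intro]: "linear_nc L \<Longrightarrow> linear_nc (\<lambda>p. sh q (L p))"
  unfolding sh_eq_bil by (rule linear_nc_comp[OF linear_nc_bil_right])

lemma linear_nc_ncmult_left [intro]: "linear_nc L \<Longrightarrow> linear_nc (\<lambda>p. ncmult (L p) q)"
  unfolding ncmult_eq_bil by (rule linear_nc_comp[OF linear_nc_bil_left])

lemma linear_nc_ncmult_right [intro]: "linear_nc L \<Longrightarrow> linear_nc (\<lambda>p. ncmult q (L p))"
  unfolding ncmult_eq_bil by (rule linear_nc_comp[OF linear_nc_bil_right])

lemma linear_nc_rmul [intro]: "linear_nc L \<Longrightarrow> linear_nc (\<lambda>p. rmul (L p) x)"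
  unfolding rmul_def by (rule linear_nc_ncmult_left)

lemmas linear_nc_intros = linear_nc_id linear_nc_plus linear_nc_scal_comp
  linear_nc_sh_left linear_nc_sh_right linear_nc_ncmult_left linear_nc_ncmult_right linear_nc_rmul

lemmas sh_add_left = linear_nc_add[OF linear_nc_sh_left[OF linear_nc_id]]
lemmas sh_add_right = linear_nc_add[OF linear_nc_sh_right[OF linear_nc_id]]
lemmas sh_scal_left = linear_nc_scal[OF linear_nc_sh_left[OF linear_nc_id]]
lemmas sh_scal_right = linear_nc_scal[OF linear_nc_sh_right[OF linear_nc_id]]
lemmas sh_sum_right = linear_nc_sum[OF linear_nc_sh_right[OF linear_nc_id]]
lemmas sh_zero_left [simp] = linear_nc_zero[OF linear_nc_sh_left[OF linear_nc_id]]
lemmas sh_zero_right [simp] = linear_nc_zero[OF linear_nc_sh_right[OF linear_nc_id]]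
lemmas rmul_add = linear_nc_add[OF linear_nc_rmul[OF linear_nc_id]]
lemmas rmul_scal = linear_nc_scal[OF linear_nc_rmul[OF linear_nc_id]]
lemmas rmul_sum = linear_nc_sum[OF linear_nc_rmul[OF linear_nc_id]]
lemmas ncmult_add_right = linear_nc_add[OF linear_nc_ncmult_right[OF linear_nc_id]]
lemmas ncmult_scal_right = linear_nc_scal[OF linear_nc_ncmult_right[OF linear_nc_id]]

lemma ncmult_word [simp]: "ncmult (word u) (word v) = word (u @ v)"
  by (simp add: ncmult_eq_bil)

lemma rmul_word [simp]: "rmul (word u) x = word (u @ [x])"
  by (simp add: rmul_def)

lemma sh_word [simp]: "sh (word u) (word v) = shw u v"
  by (simp add: sh_eq_bil)

lemma ncmult_assoc: "ncmult (ncmult p q) r = ncmult p (ncmult q r)"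
proof -
  have word_left: "ncmult (ncmult (word u) q) r = ncmult (word u) (ncmult q r)" for u
    by (rule bilinear_nc_ext[where L="\<lambda>q r. ncmult (ncmult (word u) q) r"
          and M="\<lambda>q r. ncmult (word u) (ncmult q r)"]; (intro linear_nc_intros)?; simp)
  show ?thesis
    by (rule linear_nc_ext[where L="\<lambda>p. ncmult (ncmult p q) r" and M="\<lambda>p. ncmult p (ncmult q r)"];
        (intro linear_nc_intros)?; simp only: word_left)
qed

lemma ncmult_one_right [simp]: "ncmult p nc_one = p"
  by (rule linear_nc_ext[where L="\<lambda>p. ncmult p nc_one" and M="\<lambda>p. p"]) (auto simp: nc_one_def)

lemma rmul_ncmult: "rmul (ncmult p q) x = ncmult p (rmul q x)"
  by (simp add: rmul_def ncmult_assoc)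

section \<open>Recursion rules for the \<open>\<hbar>\<close>-shuffle\<close>

declare shw.simps [simp del]

lemma shw_Nil_left [simp]: "shw [] v = word v"
  by (subst shw.simps) simp

lemma shw_Nil_right [simp]: "shw u [] = word u"
  by (subst shw.simps) simp

lemma shw_snoc_B_left: "shw (u @ [B]) v = rmul (shw u v) B"
  by (cases "v = []") (subst shw.simps, simp)+

lemma shw_snoc_B_right: "shw u (v @ [B]) = rmul (shw u v) B"
proof (induction u rule: rev_induct)
  case (snoc x u)
  then show ?case
    by (cases x) (subst shw.simps, simp, simp add: shw_snoc_B_left)
qed simp

lemma shw_snoc_A_A:
  "shw (u @ [A]) (v @ [A]) = rmul (shw (u @ [A]) v + shw u (v @ [A]) + scal hbar (shw u v)) A"
  by (subst shw.simps) simp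

lemma sh_one_left [simp]: "sh nc_one q = q"
  by (rule linear_nc_ext[where L="\<lambda>q. sh nc_one q" and M="\<lambda>q. q"]) (auto simp: nc_one_def)

lemma sh_one_right [simp]: "sh p nc_one = p"
  by (rule linear_nc_ext[where L="\<lambda>p. sh p nc_one" and M="\<lambda>p. p"]) (auto simp: nc_one_def)

lemma sh_rmul_B_left: "sh (rmul p B) q = rmul (sh p q) B"
  by (rule bilinear_nc_ext[where L="\<lambda>p q. sh (rmul p B) q" and M="\<lambda>p q. rmul (sh p q) B"])
     ((intro linear_nc_intros)?; simp add: shw_snoc_B_left)+

lemma sh_rmul_B_right: "sh p (rmul q B) = rmul (sh p q) B"
  by (rule bilinear_nc_ext[where L="\<lambda>p q. sh p (rmul q B)" and M="\<lambda>p q. rmul (sh p q) B"])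
     ((intro linear_nc_intros)?; simp add: shw_snoc_B_right)+

lemma sh_rmul_A_A:
  "sh (rmul p A) (rmul q A) = rmul (sh (rmul p A) q + sh p (rmul q A) + scal hbar (sh p q)) A"
  by (rule bilinear_nc_ext[where L="\<lambda>p q. sh (rmul p A) (rmul q A)"
        and M="\<lambda>p q. rmul (sh (rmul p A) q + sh p (rmul q A) + scal hbar (sh p q)) A"])
     ((intro linear_nc_intros)?; simp add: shw_snoc_A_A)+

section \<open>Trailing \<open>b\<close>'s\<close>

lemma replicate_Suc_snoc: "replicate (Suc n) x = replicate n x @ [x]"
  by (simp add: replicate_append_same)

definition trailing_Bs :: "letter list \<Rightarrow> nat" where
  "trailing_Bs u = length (takeWhile (\<lambda>x. x = B) (rev u))"

definition strip_Bs :: "letter list \<Rightarrow> letter list" where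
  "strip_Bs u = rev (dropWhile (\<lambda>x. x = B) (rev u))"

lemma trailing_Bs_Nil [simp]: "trailing_Bs [] = 0"
  by (simp add: trailing_Bs_def)

lemma trailing_Bs_snoc_B [simp]: "trailing_Bs (u @ [B]) = Suc (trailing_Bs u)"
  by (simp add: trailing_Bs_def)

lemma trailing_Bs_snoc_A [simp]: "trailing_Bs (u @ [A]) = 0"
  by (simp add: trailing_Bs_def)

lemma trailing_Bs_append_replicate [simp]: "trailing_Bs (u @ replicate i B) = trailing_Bs u + i"
  by (induction i) (simp_all flip: replicate_append_same append_assoc)

lemma trailing_Bs_append: "trailing_Bs u = 0 \<Longrightarrow> trailing_Bs (u @ v) = trailing_Bs v"
proof (induction v rule: rev_induct)
  case (snoc x v)
  then show ?case by (cases x) (simp_all flip: append_assoc)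
qed simp

lemma strip_Bs_append_replicate: "strip_Bs u @ replicate (trailing_Bs u) B = u"
proof -
  have "takeWhile (\<lambda>x. x = B) (rev u) = replicate (trailing_Bs u) B"
    unfolding trailing_Bs_def by (metis (mono_tags) replicate_length_same set_takeWhileD)
  then have "rev u = replicate (trailing_Bs u) B @ rev (strip_Bs u)"
    by (metis strip_Bs_def rev_rev_ident takeWhile_dropWhile_id)
  then show ?thesis
    by (metis rev_append rev_replicate rev_rev_ident)
qed

lemma trailing_Bs_strip_Bs [simp]: "trailing_Bs (strip_Bs u) = 0"
proof -
  have "takeWhile P (dropWhile P xs) = []" for P and xs :: "'a list"
    by (induction xs) auto
  then show ?thesis
    by (simp add: trailing_Bs_def strip_Bs_def)
qed

definition no_trailing_B :: "nc \<Rightarrow> bool" where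
  "no_trailing_B p \<longleftrightarrow> (\<forall>u\<in>Poly_Mapping.keys p. trailing_Bs u = 0)"

definition rmul_Bs :: "nat \<Rightarrow> nc \<Rightarrow> nc" where
  "rmul_Bs i p = ncmult p (word (replicate i B))"

definition J :: "nc \<Rightarrow> nc" where
  "J p = lin (\<lambda>u. scal [: 1 / of_nat (trailing_Bs u + 1) :] (word u)) p"

lemma linear_nc_J_op: "linear_nc J"
  unfolding J_def by (rule linear_nc_lin)

lemma linear_nc_J [intro]: "linear_nc L \<Longrightarrow> linear_nc (\<lambda>p. J (L p))"
  by (rule linear_nc_comp[OF linear_nc_J_op])

lemma linear_nc_rmul_Bs [intro]: "linear_nc L \<Longrightarrow> linear_nc (\<lambda>p. rmul_Bs i (L p))"
  unfolding rmul_Bs_def by (rule linear_nc_ncmult_left)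

lemmas J_add = linear_nc_add[OF linear_nc_J[OF linear_nc_id]]
lemmas J_scal = linear_nc_scal[OF linear_nc_J[OF linear_nc_id]]
lemmas J_sum = linear_nc_sum[OF linear_nc_J[OF linear_nc_id]]
lemmas rmul_Bs_scal = linear_nc_scal[OF linear_nc_rmul_Bs[OF linear_nc_id]]

lemma J_word: "J (word u) = scal [: 1 / of_nat (trailing_Bs u + 1) :] (word u)"
  by (simp add: J_def)

lemma rmul_Bs_0 [simp]: "rmul_Bs 0 p = p"
  by (simp add: rmul_Bs_def flip: nc_one_def)

lemma rmul_Bs_Suc: "rmul_Bs (Suc i) p = rmul (rmul_Bs i p) B"
  by (simp add: rmul_Bs_def rmul_def ncmult_assoc flip: replicate_append_same)

lemma rmul_Bs_rmul_Bs: "rmul_Bs i (rmul_Bs j p) = rmul_Bs (i + j) p"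
  by (simp add: rmul_Bs_def ncmult_assoc replicate_add[symmetric] add.commute)

lemma rmul_Bs_eq_lin: "rmul_Bs i p = lin (\<lambda>w. word (w @ replicate i B)) p"
  by (simp add: rmul_Bs_def ncmult_eq_bil bil_def)

lemma word_eq_rmul_Bs: "word u = rmul_Bs (trailing_Bs u) (word (strip_Bs u))"
  by (simp add: rmul_Bs_def strip_Bs_append_replicate)

lemma no_trailing_B_zero [simp]: "no_trailing_B 0"
  by (simp add: no_trailing_B_def)

lemma no_trailing_B_word [simp]: "no_trailing_B (word u) \<longleftrightarrow> trailing_Bs u = 0"
  by (simp add: no_trailing_B_def word_def)

lemma no_trailing_B_lin: "(\<And>u. u \<in> Poly_Mapping.keys p \<Longrightarrow> no_trailing_B (f u)) \<Longrightarrow> no_trailing_B (lin f p)"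
proof -
  have keys_lin: "Poly_Mapping.keys (lin f p) \<subseteq> (\<Union>u\<in>Poly_Mapping.keys p. Poly_Mapping.keys (f u))"
    unfolding lin_def using keys_sum keys_scal_subset by fastforce
  then show "(\<And>u. u \<in> Poly_Mapping.keys p \<Longrightarrow> no_trailing_B (f u)) \<Longrightarrow> no_trailing_B (lin f p)"
    unfolding no_trailing_B_def by blast
qed

lemma rmul_eq_lin: "rmul p x = lin (\<lambda>u. word (u @ [x])) p"
  by (rule linear_nc_ext[where L="\<lambda>p. rmul p x" and M="lin (\<lambda>u. word (u @ [x]))"]) auto

lemma no_trailing_B_rmul_A: "no_trailing_B (rmul p A)"
  unfolding rmul_eq_lin by (auto intro!: no_trailing_B_lin)

lemma no_trailing_B_shw: "trailing_Bs u = 0 \<Longrightarrow> trailing_Bs v = 0 \<Longrightarrow> no_trailing_B (shw u v)"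
proof (cases "u = [] \<or> v = []")
  case False
  then obtain u' x v' y where "u = u' @ [x]" "v = v' @ [y]"
    by (metis rev_exhaust)
  moreover assume "trailing_Bs u = 0" "trailing_Bs v = 0"
  ultimately show ?thesis
    by (cases x; cases y) (simp_all add: shw_snoc_A_A no_trailing_B_rmul_A)
qed auto

lemma no_trailing_B_sh: "no_trailing_B p \<Longrightarrow> no_trailing_B q \<Longrightarrow> no_trailing_B (sh p q)"
  unfolding sh_eq_bil bil_def
  by (intro no_trailing_B_lin no_trailing_B_shw) (auto simp: no_trailing_B_def)

lemma J_no_trailing_B: "no_trailing_B p \<Longrightarrow> J p = p"
  unfolding J_def no_trailing_B_def
  by (subst lin_cong[where h=word]) (simp_all flip: one_pCons)

lemma J_rmul_Bs:
  assumes "no_trailing_B p"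
  shows "J (rmul_Bs i p) = scal [: 1 / of_nat (i + 1) :] (rmul_Bs i p)"
proof -
  have "J (rmul_Bs i p) = lin (\<lambda>w. J (word (w @ replicate i B))) p"
    by (simp add: rmul_Bs_eq_lin lin_linear_nc[OF linear_nc_J_op])
  also have "\<dots> = lin (\<lambda>w. scal [: 1 / of_nat (i + 1) :] (word (w @ replicate i B))) p"
    using assms by (intro lin_cong) (simp add: J_word no_trailing_B_def)
  also have "\<dots> = scal [: 1 / of_nat (i + 1) :] (rmul_Bs i p)"
    by (simp add: lin_fun_scal rmul_Bs_eq_lin)
  finally show ?thesis .
qed

lemma J_ncmult:
  assumes "no_trailing_B p"
  shows "J (ncmult p q) = ncmult p (J q)"
proof (rule linear_nc_ext[where L="\<lambda>q. J (ncmult p q)" and M="\<lambda>q. ncmult p (J q)"])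
  fix v
  have "J (ncmult p (word v)) = lin (\<lambda>w. J (word (w @ v))) p"
    by (simp add: ncmult_eq_bil bil_def lin_linear_nc[OF linear_nc_J_op])
  also have "\<dots> = lin (\<lambda>w. scal [: 1 / of_nat (trailing_Bs v + 1) :] (word (w @ v))) p"
    using assms by (intro lin_cong) (simp add: J_word no_trailing_B_def trailing_Bs_append)
  also have "\<dots> = scal [: 1 / of_nat (trailing_Bs v + 1) :] (ncmult p (word v))"
    by (simp add: lin_fun_scal ncmult_eq_bil bil_def)
  also have "\<dots> = ncmult p (J (word v))"
    by (simp add: J_word ncmult_scal_right)
  finally show "J (ncmult p (word v)) = ncmult p (J (word v))" .
qed (intro linear_nc_intros linear_nc_J)+

lemma sh_rmul_Bs_left: "sh (rmul_Bs i p) q = rmul_Bs i (sh p q)"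
  by (induction i) (simp_all add: rmul_Bs_Suc sh_rmul_B_left)

lemma sh_rmul_Bs_right: "sh p (rmul_Bs i q) = rmul_Bs i (sh p q)"
  by (induction i) (simp_all add: rmul_Bs_Suc sh_rmul_B_right)

lemma J_sh_left:
  assumes "no_trailing_B p"
  shows "J (sh p q) = sh p (J q)"
proof (rule linear_nc_ext[where L="\<lambda>q. J (sh p q)" and M="\<lambda>q. sh p (J q)"])
  fix v
  have "sh p (word v) = rmul_Bs (trailing_Bs v) (sh p (word (strip_Bs v)))"
    by (subst word_eq_rmul_Bs) (rule sh_rmul_Bs_right)
  moreover have "no_trailing_B (sh p (word (strip_Bs v)))"
    using assms by (simp add: no_trailing_B_sh)
  ultimately show "J (sh p (word v)) = sh p (J (word v))"
    by (simp add: J_rmul_Bs J_word sh_scal_right)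
qed (intro linear_nc_intros linear_nc_J)+

lemma J_sh_right:
  assumes "no_trailing_B q"
  shows "J (sh p q) = sh (J p) q"
proof (rule linear_nc_ext[where L="\<lambda>p. J (sh p q)" and M="\<lambda>p. sh (J p) q"])
  fix u
  have "sh (word u) q = rmul_Bs (trailing_Bs u) (sh (word (strip_Bs u)) q)"
    by (subst word_eq_rmul_Bs) (rule sh_rmul_Bs_left)
  moreover have "no_trailing_B (sh (word (strip_Bs u)) q)"
    using assms by (simp add: no_trailing_B_sh)
  ultimately show "J (sh (word u) q) = sh (J (word u)) q"
    by (simp add: J_rmul_Bs J_word sh_scal_left)
qed (intro linear_nc_intros linear_nc_J)+

lemma inverse_Suc_product_identity:
  "[: 1 / of_nat (j + 1) :: rat :] * [: 1 / of_nat (i + 1) :] =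
   ([: 1 / of_nat (i + 1) :] + [: 1 / of_nat (j + 1) :]) * [: 1 / of_nat (i + j + 1 + 1) :]"
proof -
  have "(1 / of_nat (j + 1)) * (1 / of_nat (i + 1) :: rat) =
        (1 / of_nat (i + 1) + 1 / of_nat (j + 1)) * (1 / of_nat (i + j + 1 + 1))"
    by (simp add: field_simps add_nonneg_eq_0_iff)
  moreover have "[:x:] * [:y:] = [:x * y:]" "[:x:] + [:y:] = [:x + y:]" for x y :: rat
    by simp_all
  ultimately show ?thesis
    by (simp only:)
qed

text \<open>On words \<open>u' b^i\<close> and \<open>v' b^j\<close> this is the identity
  \<open>1/((i+1)(j+1)) = (1/(i+1) + 1/(j+1)) / (i+j+2)\<close>: integration by parts for \<open>b \<mapsto> J(\<cdot>) b\<close>.\<close>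

lemma J_integration_by_parts: "rmul (sh (J p) (J q)) B = J (rmul (sh (J p) q + sh p (J q)) B)"
proof (rule bilinear_nc_ext[where L="\<lambda>p q. rmul (sh (J p) (J q)) B"
      and M="\<lambda>p q. J (rmul (sh (J p) q + sh p (J q)) B)"])
  fix u v
  let ?i = "trailing_Bs u" and ?j = "trailing_Bs v"
  let ?X = "shw (strip_Bs u) (strip_Bs v)"
  let ?a = "[: 1 / of_nat (?i + 1) :: rat :]" and ?b = "[: 1 / of_nat (?j + 1) :: rat :]"
  have X: "no_trailing_B ?X"
    by (simp add: no_trailing_B_shw)
  have "sh (word u) (word v) = rmul_Bs (?i + ?j) ?X"
    by (subst (1 2) word_eq_rmul_Bs) (simp only: sh_rmul_Bs_left sh_rmul_Bs_right rmul_Bs_rmul_Bs sh_word add.commute)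
  then have uv: "rmul (sh (word u) (word v)) B = rmul_Bs (?i + ?j + 1) ?X"
    by (simp add: rmul_Bs_Suc)
  have "rmul (sh (J (word u)) (J (word v))) B = scal (?b * ?a) (rmul_Bs (?i + ?j + 1) ?X)"
    by (simp only: J_word sh_scal_left sh_scal_right rmul_scal uv scal_scal)
  also have "\<dots> = scal ((?a + ?b) * [: 1 / of_nat (?i + ?j + 1 + 1) :]) (rmul_Bs (?i + ?j + 1) ?X)"
    by (simp only: inverse_Suc_product_identity)
  also have "\<dots> = J (rmul (sh (J (word u)) (word v) + sh (word u) (J (word v))) B)"
    by (simp only: J_word sh_scal_left sh_scal_right rmul_scal uv scal_scal
        scal_add_left[symmetric] rmul_add[symmetric] J_scal J_rmul_Bs[OF X])
  finally show "rmul (sh (J (word u)) (J (word v))) B =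
      J (rmul (sh (J (word u)) (word v) + sh (word u) (J (word v))) B)" .
qed (intro linear_nc_intros linear_nc_J)+

section \<open>Right multiplication by \<open>c = a + \<hbar>\<close>\<close>

definition rmul_c :: "nc \<Rightarrow> nc" where
  "rmul_c p = rmul p A + scal hbar p"

lemma linear_nc_rmul_c [intro]: "linear_nc L \<Longrightarrow> linear_nc (\<lambda>p. rmul_c (L p))"
  unfolding rmul_c_def by (intro linear_nc_intros)

lemmas rmul_c_add = linear_nc_add[OF linear_nc_rmul_c[OF linear_nc_id]]

lemma ncmult_c: "ncmult p (word [A] + scal hbar nc_one) = rmul_c p"
  by (simp add: rmul_c_def ncmult_add_right ncmult_scal_right rmul_def)

lemma sh_rmul_c_rmul_A: "sh (rmul_c p) (rmul q A) = rmul (sh (rmul_c p) q) A + rmul_c (sh p (rmul q A))"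
proof -
  have "sh (rmul_c p) (rmul q A) = rmul (sh (rmul p A) q) A + rmul (sh p (rmul q A)) A
        + scal hbar (rmul (sh p q) A) + scal hbar (sh p (rmul q A))"
    by (simp only: rmul_c_def sh_add_left sh_scal_left sh_rmul_A_A rmul_add rmul_scal)
  moreover have "rmul (sh (rmul_c p) q) A + rmul_c (sh p (rmul q A)) = rmul (sh (rmul p A) q) A
        + scal hbar (rmul (sh p q) A) + (rmul (sh p (rmul q A)) A + scal hbar (sh p (rmul q A)))"
    by (simp only: rmul_c_def sh_add_left sh_scal_left rmul_add rmul_scal)
  ultimately show ?thesis
    by (simp only: add_ac)
qed

lemma sh_rmul_A_rmul_c: "sh (rmul p A) (rmul_c q) = rmul_c (sh (rmul p A) q) + rmul (sh p (rmul_c q)) A"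
proof -
  have "sh (rmul p A) (rmul_c q) = rmul (sh (rmul p A) q) A + rmul (sh p (rmul q A)) A
        + scal hbar (rmul (sh p q) A) + scal hbar (sh (rmul p A) q)"
    by (simp only: rmul_c_def sh_add_right sh_scal_right sh_rmul_A_A rmul_add rmul_scal)
  moreover have "rmul_c (sh (rmul p A) q) + rmul (sh p (rmul_c q)) A = rmul (sh (rmul p A) q) A
        + scal hbar (sh (rmul p A) q) + (rmul (sh p (rmul q A)) A + scal hbar (rmul (sh p q) A))"
    by (simp only: rmul_c_def sh_add_right sh_scal_right rmul_add rmul_scal)
  ultimately show ?thesis
    by (simp only: add_ac)
qed

lemma sh_rmul_c_rmul_c:
  "sh (rmul_c p) (rmul_c q) = rmul_c (sh (rmul_c p) q + sh p (rmul_c q) - scal hbar (sh p q))"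
proof -
  have middle: "sh (rmul_c p) q + sh p (rmul_c q) - scal hbar (sh p q) =
      sh (rmul p A) q + sh p (rmul q A) + scal hbar (sh p q)"
    by (simp add: rmul_c_def sh_add_left sh_add_right sh_scal_left sh_scal_right algebra_simps)
  have "sh (rmul_c p) (rmul_c q) = rmul (sh (rmul p A) q) A + rmul (sh p (rmul q A)) A
        + scal hbar (rmul (sh p q) A) + scal hbar (sh (rmul p A) q) + scal hbar (sh p (rmul q A))
        + scal (hbar * hbar) (sh p q)"
    by (simp only: rmul_c_def sh_add_left sh_add_right sh_scal_left sh_scal_right sh_rmul_A_A
        rmul_add rmul_scal scal_scal scal_add_right add_ac)
  also have "\<dots> = rmul_c (sh (rmul p A) q + sh p (rmul q A) + scal hbar (sh p q))"
    by (simp only: rmul_c_def rmul_add rmul_scal scal_add_right scal_scal add_ac)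
  finally show ?thesis
    by (simp only: middle)
qed

section \<open>A shuffle homomorphism\<close>

text \<open>Unlike \<^const>\<open>shw\<close>, this shuffle treats \<open>b\<close> as an ordinary letter.\<close>

function qshw :: "letter list \<Rightarrow> letter list \<Rightarrow> nc" where
  "qshw u v =
    (if u = [] then word v
     else if v = [] then word u
     else rmul (qshw (butlast u) v) (last u) + rmul (qshw u (butlast v)) (last v)
          + (if last u = A \<and> last v = A then scal hbar (rmul (qshw (butlast u) (butlast v)) A) else 0))"
  by pat_completeness auto
termination
  by (relation "measure (\<lambda>(u, v). length u + length v)") (auto simp: Suc_le_eq)

declare qshw.simps [simp del]

lemma qshw_Nil_left [simp]: "qshw [] v = word v"
  by (subst qshw.simps) simp

lemma qshw_Nil_right [simp]: "qshw u [] = word u"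
  by (subst qshw.simps) simp

lemma qshw_snoc_snoc: "qshw (u @ [x]) (v @ [y]) = rmul (qshw u (v @ [y])) x + rmul (qshw (u @ [x]) v) y
    + (if x = A \<and> y = A then scal hbar (rmul (qshw u v) A) else 0)"
  by (subst qshw.simps) simp

fun F_rev :: "letter list \<Rightarrow> nc" where
  "F_rev [] = nc_one"
| "F_rev (A # w) = rmul (F_rev w) A"
| "F_rev (B # w) = rmul_c (rmul (J (F_rev w)) B)"

definition F_word :: "letter list \<Rightarrow> nc" where
  "F_word w = F_rev (rev w)"

definition F :: "nc \<Rightarrow> nc" where
  "F = lin F_word"

lemma F_word_Nil [simp]: "F_word [] = nc_one"
  by (simp add: F_word_def)

lemma F_word_snoc_A: "F_word (w @ [A]) = rmul (F_word w) A"
  by (simp add: F_word_def)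

lemma F_word_snoc_B: "F_word (w @ [B]) = rmul_c (rmul (J (F_word w)) B)"
  by (simp add: F_word_def)

lemma linear_nc_F_op: "linear_nc F"
  by (simp add: F_def)

lemma linear_nc_F [intro]: "linear_nc L \<Longrightarrow> linear_nc (\<lambda>p. F (L p))"
  by (rule linear_nc_comp[OF linear_nc_F_op])

lemma F_word [simp]: "F (word w) = F_word w"
  by (simp add: F_def)

lemmas F_add = linear_nc_add[OF linear_nc_F_op]
lemmas F_scal = linear_nc_scal[OF linear_nc_F_op]

lemma F_rmul_A: "F (rmul p A) = rmul (F p) A"
  by (rule linear_nc_ext[where L="\<lambda>p. F (rmul p A)" and M="\<lambda>p. rmul (F p) A"])
     ((intro linear_nc_F linear_nc_intros)?; simp add: F_word_snoc_A)+

lemma F_rmul_B: "F (rmul p B) = rmul_c (rmul (J (F p)) B)"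
  by (rule linear_nc_ext[where L="\<lambda>p. F (rmul p B)" and M="\<lambda>p. rmul_c (rmul (J (F p)) B)"])
     ((intro linear_nc_F linear_nc_rmul_c linear_nc_J linear_nc_intros)?; simp add: F_word_snoc_B)+

lemma no_trailing_B_F_word_snoc_A: "no_trailing_B (F_word (w @ [A]))"
  by (simp add: F_word_snoc_A no_trailing_B_rmul_A)

lemma sh_rmul_c_integrals:
  fixes p q :: nc
  defines "X \<equiv> rmul (J p) B" and "Y \<equiv> rmul (J q) B"
  shows "sh (rmul_c X) Y + sh X (rmul_c Y) - scal hbar (sh X Y) =
         rmul (J (sh p (rmul_c Y)) + J (sh (rmul_c X) q)) B"
proof -
  let ?W = "rmul (sh (J p) (J q)) B"
  have e1: "sh (rmul_c X) Y = rmul (sh (rmul X A) (J q) + scal hbar ?W) B"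
    by (simp only: Y_def sh_rmul_B_right rmul_c_def sh_add_left sh_scal_left X_def sh_rmul_B_left
        rmul_add rmul_scal)
  have e2: "sh X (rmul_c Y) = rmul (sh (J p) (rmul Y A) + scal hbar ?W) B"
    by (simp only: X_def sh_rmul_B_left rmul_c_def sh_add_right sh_scal_right Y_def sh_rmul_B_right
        rmul_add rmul_scal)
  have e3: "sh X Y = rmul ?W B"
    by (simp only: X_def Y_def sh_rmul_B_left sh_rmul_B_right)
  have e4: "J (sh p (rmul_c Y)) = sh (J p) (rmul Y A) + scal hbar (J (rmul (sh p (J q)) B))"
    by (simp only: rmul_c_def sh_add_right sh_scal_right J_add J_scal
        J_sh_right[OF no_trailing_B_rmul_A] Y_def sh_rmul_B_right)
  have e5: "J (sh (rmul_c X) q) = sh (rmul X A) (J q) + scal hbar (J (rmul (sh (J p) q) B))"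
    by (simp only: rmul_c_def sh_add_left sh_scal_left J_add J_scal
        J_sh_left[OF no_trailing_B_rmul_A] X_def sh_rmul_B_left)
  have e6: "J (rmul (sh p (J q)) B) + J (rmul (sh (J p) q) B) = ?W"
    by (simp only: J_integration_by_parts J_add[symmetric] rmul_add[symmetric] add.commute)
  have "rmul (J (sh p (rmul_c Y)) + J (sh (rmul_c X) q)) B =
        rmul (sh (J p) (rmul Y A)) B + rmul (sh (rmul X A) (J q)) B + scal hbar (rmul ?W B)"
    by (simp only: e4 e5 rmul_add rmul_scal add_ac scal_add_right[symmetric] e6)
  moreover have "sh (rmul_c X) Y + sh X (rmul_c Y) - scal hbar (sh X Y) =
        rmul (sh (J p) (rmul Y A)) B + rmul (sh (rmul X A) (J q)) B + scal hbar (rmul ?W B)"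
    by (simp add: e1 e2 e3 rmul_add rmul_scal algebra_simps)
  ultimately show ?thesis
    by simp
qed

lemma sh_F_word_snoc_snoc:
  assumes IH1: "sh (F_word u) (F_word (v @ [y])) = F (qshw u (v @ [y]))"
    and IH2: "sh (F_word (u @ [x])) (F_word v) = F (qshw (u @ [x]) v)"
    and IH3: "sh (F_word u) (F_word v) = F (qshw u v)"
  shows "sh (F_word (u @ [x])) (F_word (v @ [y])) = F (qshw (u @ [x]) (v @ [y]))"
proof (cases x; cases y)
  assume xy: "x = A" "y = A"
  have "sh (F_word (u @ [x])) (F_word (v @ [y])) = rmul (sh (F_word (u @ [x])) (F_word v)
      + sh (F_word u) (F_word (v @ [y])) + scal hbar (sh (F_word u) (F_word v))) A"
    by (simp only: xy F_word_snoc_A sh_rmul_A_A)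
  then show ?thesis
    using IH1 IH2 IH3 by (simp add: xy qshw_snoc_snoc F_add F_scal F_rmul_A rmul_add rmul_scal add_ac)
next
  assume xy: "x = A" "y = B"
  have "sh (F_word (u @ [x])) (F_word (v @ [y])) =
      rmul_c (sh (F_word (u @ [x])) (rmul (J (F_word v)) B)) + rmul (sh (F_word u) (F_word (v @ [y]))) A"
    by (simp only: xy F_word_snoc_A F_word_snoc_B sh_rmul_A_rmul_c)
  also have "\<dots> = rmul_c (rmul (J (F (qshw (u @ [x]) v))) B) + rmul (F (qshw u (v @ [y]))) A"
    by (simp only: sh_rmul_B_right IH1 IH2
        J_sh_left[OF no_trailing_B_F_word_snoc_A, folded xy(1), symmetric])
  finally show ?thesis
    by (simp add: xy qshw_snoc_snoc F_add F_rmul_A F_rmul_B add_ac)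
next
  assume xy: "x = B" "y = A"
  have "sh (F_word (u @ [x])) (F_word (v @ [y])) =
      rmul (sh (F_word (u @ [x])) (F_word v)) A + rmul_c (sh (rmul (J (F_word u)) B) (F_word (v @ [y])))"
    by (simp only: xy F_word_snoc_A F_word_snoc_B sh_rmul_c_rmul_A)
  also have "\<dots> = rmul (F (qshw (u @ [x]) v)) A + rmul_c (rmul (J (F (qshw u (v @ [y])))) B)"
    by (simp only: sh_rmul_B_left IH1 IH2
        J_sh_right[OF no_trailing_B_F_word_snoc_A, folded xy(2), symmetric])
  finally show ?thesis
    by (simp add: xy qshw_snoc_snoc F_add F_rmul_A F_rmul_B add_ac)
next
  assume xy: "x = B" "y = B"
  have "sh (F_word (u @ [x])) (F_word (v @ [y])) =
      rmul_c (rmul (J (sh (F_word u) (F_word (v @ [y]))) + J (sh (F_word (u @ [x])) (F_word v))) B)"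
    by (simp only: xy F_word_snoc_B sh_rmul_c_rmul_c sh_rmul_c_integrals)
  then show ?thesis
    using IH1 IH2 by (simp add: xy qshw_snoc_snoc F_add F_rmul_B J_add rmul_add rmul_c_add)
qed

theorem sh_F_word: "sh (F_word u) (F_word v) = F (qshw u v)"
proof (induction "length u + length v" arbitrary: u v rule: less_induct)
  case less
  show ?case
  proof (cases "u = [] \<or> v = []")
    case False
    then obtain u' x v' y where u: "u = u' @ [x]" and v: "v = v' @ [y]"
      by (metis rev_exhaust)
    show ?thesis
      unfolding u v by (rule sh_F_word_snoc_snoc) (simp_all add: less u v)
  qed auto
qed

section \<open>The elements \<open>E1 m\<close>\<close>

definition proj_no_trailing_B :: "nc \<Rightarrow> nc" where
  "proj_no_trailing_B = lin (\<lambda>u. if trailing_Bs u = 0 then word u else 0)"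

lemma linear_nc_proj_no_trailing_B_op: "linear_nc proj_no_trailing_B"
  by (simp add: proj_no_trailing_B_def)

lemma linear_nc_proj_no_trailing_B [intro]:
  "linear_nc L \<Longrightarrow> linear_nc (\<lambda>p. proj_no_trailing_B (L p))"
  by (rule linear_nc_comp[OF linear_nc_proj_no_trailing_B_op])

lemmas proj_no_trailing_B_add = linear_nc_add[OF linear_nc_proj_no_trailing_B_op]
lemmas proj_no_trailing_B_scal = linear_nc_scal[OF linear_nc_proj_no_trailing_B_op]

lemma proj_no_trailing_B_word:
  "proj_no_trailing_B (word u) = (if trailing_Bs u = 0 then word u else 0)"
  by (simp add: proj_no_trailing_B_def)

lemma proj_no_trailing_B_id: "no_trailing_B p \<Longrightarrow> proj_no_trailing_B p = p"
  unfolding proj_no_trailing_B_def no_trailing_B_def by (subst lin_cong[where h=word]) simp_all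

lemma no_trailing_B_proj: "no_trailing_B (proj_no_trailing_B p)"
  unfolding proj_no_trailing_B_def by (intro no_trailing_B_lin) simp

lemma proj_no_trailing_B_rmul_Bs: "0 < i \<Longrightarrow> proj_no_trailing_B (rmul_Bs i p) = 0"
  by (simp add: rmul_Bs_eq_lin lin_linear_nc[OF linear_nc_proj_no_trailing_B_op]
      proj_no_trailing_B_word lin_cong[where h="\<lambda>_. 0"])

lemma proj_no_trailing_B_rmul_B: "proj_no_trailing_B (rmul p B) = 0"
  using proj_no_trailing_B_rmul_Bs[of 1 p] by (simp add: rmul_Bs_Suc)

lemma proj_no_trailing_B_sh:
  "proj_no_trailing_B (sh p q) = sh (proj_no_trailing_B p) (proj_no_trailing_B q)"
proof (rule bilinear_nc_ext[where L="\<lambda>p q. proj_no_trailing_B (sh p q)"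
      and M="\<lambda>p q. sh (proj_no_trailing_B p) (proj_no_trailing_B q)"])
  fix u v
  consider "trailing_Bs u \<noteq> 0" | "trailing_Bs v \<noteq> 0" | "trailing_Bs u = 0" "trailing_Bs v = 0"
    by blast
  then show "proj_no_trailing_B (sh (word u) (word v)) =
      sh (proj_no_trailing_B (word u)) (proj_no_trailing_B (word v))"
  proof cases
    case 1
    then show ?thesis
      by (subst (1 2) word_eq_rmul_Bs[of u])
         (simp add: sh_rmul_Bs_left proj_no_trailing_B_rmul_Bs proj_no_trailing_B_word)
  next
    case 2
    then show ?thesis
      by (subst (1 2) word_eq_rmul_Bs[of v])
         (simp add: sh_rmul_Bs_right proj_no_trailing_B_rmul_Bs proj_no_trailing_B_word)
  next
    case 3
    then show ?thesis
      by (simp add: proj_no_trailing_B_word proj_no_trailing_B_id no_trailing_B_shw)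
  qed
qed (intro linear_nc_intros linear_nc_proj_no_trailing_B)+

definition F_Bs :: "nat \<Rightarrow> nc" where
  "F_Bs n = F_word (replicate n B)"

definition G_Bs :: "nat \<Rightarrow> nc" where
  "G_Bs n = proj_no_trailing_B (F_Bs n)"

lemma F_Bs_0 [simp]: "F_Bs 0 = nc_one"
  by (simp add: F_Bs_def)

lemma F_Bs_Suc: "F_Bs (Suc n) = rmul_c (rmul (J (F_Bs n)) B)"
  by (simp add: F_Bs_def F_word_snoc_B flip: replicate_append_same)

lemma G_Bs_0 [simp]: "G_Bs 0 = nc_one"
  by (simp add: G_Bs_def proj_no_trailing_B_id nc_one_def)

lemma G_Bs_Suc: "G_Bs (Suc n) = rmul (rmul (J (F_Bs n)) B) A"
  by (simp add: G_Bs_def F_Bs_Suc rmul_c_def proj_no_trailing_B_add proj_no_trailing_B_scal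
      proj_no_trailing_B_rmul_B proj_no_trailing_B_id no_trailing_B_rmul_A)

lemma no_trailing_B_G_Bs: "no_trailing_B (G_Bs n)"
  by (simp add: G_Bs_def no_trailing_B_proj)

lemma e_1_eq_F_Bs: "e 1 = F_Bs 1"
  by (simp add: e_def F_Bs_Suc ncmult_c flip: nc_one_def) (simp add: nc_one_def J_no_trailing_B)

lemma g_1_eq_G_Bs: "g 1 = G_Bs 1"
  by (simp add: g_def G_Bs_Suc J_no_trailing_B nc_one_def)

lemma qshw_replicate_B:
  "qshw (replicate j B) (replicate l B) = scal (of_nat ((j + l) choose j)) (word (replicate (j + l) B))"
proof (induction j arbitrary: l)
  case (Suc j)
  note outer_IH = Suc.IH
  show ?case
  proof (induction l)
    case (Suc l)
    have "qshw (replicate (Suc j) B) (replicate (Suc l) B) =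
        rmul (qshw (replicate j B) (replicate (Suc l) B)) B
        + rmul (qshw (replicate (Suc j) B) (replicate l B)) B"
      by (simp only: replicate_Suc_snoc qshw_snoc_snoc) simp
    also have "\<dots> = scal (of_nat ((j + Suc l) choose j) + of_nat ((Suc j + l) choose Suc j))
        (word (replicate (Suc j + Suc l) B))"
      by (simp only: Suc.IH outer_IH rmul_scal rmul_word replicate_Suc_snoc[symmetric])
         (simp add: scal_add_left)
    finally show ?case
      by (simp flip: of_nat_add)
  qed simp
qed simp

lemma sh_F_Bs: "sh (F_Bs j) (F_Bs l) = scal (of_nat ((j + l) choose j)) (F_Bs (j + l))"
  by (simp add: F_Bs_def sh_F_word qshw_replicate_B F_scal)

lemma sh_G_Bs: "sh (G_Bs j) (G_Bs l) = scal (of_nat ((j + l) choose j)) (G_Bs (j + l))"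
  by (simp add: G_Bs_def proj_no_trailing_B_sh[symmetric] sh_F_Bs proj_no_trailing_B_scal)

lemma shpow_e_1: "shpow (e 1) n = scal (of_nat (fact n)) (F_Bs n)"
proof (induction n)
  case (Suc n)
  have "shpow (e 1) (Suc n) = scal (of_nat (fact n)) (sh (F_Bs 1) (F_Bs n))"
    by (simp only: shpow.simps Suc) (simp only: e_1_eq_F_Bs sh_scal_right)
  then show ?case
    by (simp add: sh_F_Bs scal_scal algebra_simps)
qed simp

lemma shpow_g_1: "shpow (g 1) n = scal (of_nat (fact n)) (G_Bs n)"
proof (induction n)
  case (Suc n)
  have "shpow (g 1) (Suc n) = scal (of_nat (fact n)) (sh (G_Bs 1) (G_Bs n))"
    by (simp only: shpow.simps Suc) (simp only: g_1_eq_G_Bs sh_scal_right)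
  then show ?case
    by (simp add: sh_G_Bs scal_scal algebra_simps)
qed simp

lemma fact_choose_swap:
  assumes "i + j \<le> s"
  shows "fact j * fact (s - j) * ((s - i) choose j) = fact (s - i) * fact i * ((s - j) choose i :: nat)"
proof -
  have a: "fact j * fact (s - i - j) * ((s - i) choose j) = (fact (s - i) :: nat)"
    by (rule binomial_fact_lemma) (use assms in simp)
  have b: "fact i * fact (s - i - j) * ((s - j) choose i) = (fact (s - j) :: nat)"
    using binomial_fact_lemma[of i "s - j"] assms by (simp add: add.commute)
  have "fact j * fact (s - j) * ((s - i) choose j) * fact (s - i - j) =
        (fact j * fact (s - i - j) * ((s - i) choose j)) * (fact (s - j) :: nat)"
    by (simp only: ac_simps)
  also have "\<dots> = fact (s - i) * (fact i * fact (s - i - j) * ((s - j) choose i))"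
    by (simp only: a b)
  also have "\<dots> = fact (s - i) * fact i * ((s - j) choose i) * fact (s - i - j)"
    by (simp only: ac_simps)
  finally show ?thesis
    by simp
qed

lemma sum_fact_choose:
  assumes "i \<le> s"
  shows "(i + 1) * (\<Sum>j\<le>s - i. fact j * fact (s - j) * ((s - i) choose j)) = (fact (s + 1) :: nat)"
proof -
  have "(\<Sum>j\<le>s - i. (s - j) choose i) = (\<Sum>k\<in>{i..s}. k choose i)"
    by (rule sum.reindex_bij_witness[where i="\<lambda>k. s - k" and j="\<lambda>j. s - j"]) (use assms in auto)
  also have "\<dots> = (\<Sum>k\<le>s. k choose i)"
    by (rule sum.mono_neutral_left) auto
  finally have hockey_stick: "(\<Sum>j\<le>s - i. (s - j) choose i) = Suc s choose Suc i"
    by (simp only: sum_choose_upper)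
  have "(\<Sum>j\<le>s - i. fact j * fact (s - j) * ((s - i) choose j)) =
        (\<Sum>j\<le>s - i. fact (s - i) * fact i * ((s - j) choose i) :: nat)"
    by (rule sum.cong) (use assms fact_choose_swap in auto)
  also have "\<dots> = fact (s - i) * fact i * (Suc s choose Suc i)"
    by (simp only: sum_distrib_left[symmetric] hockey_stick)
  finally have "(i + 1) * (\<Sum>j\<le>s - i. fact j * fact (s - j) * ((s - i) choose j)) =
     fact (Suc i) * fact (Suc s - Suc i) * (Suc s choose Suc i)"
    by (simp add: algebra_simps)
  also have "\<dots> = fact (Suc s)"
    by (rule binomial_fact_lemma) (use assms in simp)
  finally show ?thesis
    by simp
qed

lemma sum_triangle_swap:
  fixes f :: "nat \<Rightarrow> nat \<Rightarrow> 'a::comm_monoid_add"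
  shows "(\<Sum>j\<le>s. \<Sum>i\<le>s - j. f j i) = (\<Sum>i\<le>s. \<Sum>j\<le>s - i. f j i)"
proof -
  have "(\<Sum>j\<le>s. \<Sum>i\<le>s - j. f j i) = (\<Sum>(j, i)\<in>(SIGMA j:{..s}. {..s - j}). f j i)"
    by (rule sum.Sigma) auto
  also have "\<dots> = (\<Sum>(i, j)\<in>(SIGMA i:{..s}. {..s - i}). f j i)"
    by (rule sum.reindex_bij_witness[where i="\<lambda>(i, j). (j, i)" and j="\<lambda>(j, i). (i, j)"]) auto
  also have "\<dots> = (\<Sum>i\<le>s. \<Sum>j\<le>s - i. f j i)"
    by (rule sum.Sigma[symmetric]) auto
  finally show ?thesis .
qed

definition hbar_coeff :: "nat \<Rightarrow> coef" where
  "hbar_coeff i = [: 1 / of_nat (fact i) :] * hbar ^ i"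

lemma hbar_coeff_0 [simp]: "hbar_coeff 0 = 1"
  by (simp add: hbar_coeff_def)

lemma hbar_coeff_Suc: "hbar * (hbar_coeff i * [: 1 / of_nat (i + 1) :]) = hbar_coeff (Suc i)"
proof -
  have "[: 1 / of_nat (fact i) :: rat :] * [: 1 / of_nat (i + 1) :] = [: 1 / of_nat (fact (Suc i)) :]"
    by (simp add: field_simps)
  then show ?thesis
    unfolding hbar_coeff_def by (simp only: power_Suc mult_ac)
qed

lemma J_sum_rmul_Bs_G_Bs:
  "J (\<Sum>i\<le>n. scal (c i) (rmul_Bs i (G_Bs (n - i)))) =
   (\<Sum>i\<le>n. scal (c i * [: 1 / of_nat (i + 1) :]) (rmul_Bs i (G_Bs (n - i))))"
  by (simp add: J_sum J_scal J_rmul_Bs no_trailing_B_G_Bs scal_scal)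

lemma F_Bs_expansion: "F_Bs n = (\<Sum>i\<le>n. scal (hbar_coeff i) (rmul_Bs i (G_Bs (n - i))))"
proof (induction n)
  case (Suc n)
  have "F_Bs (Suc n) = G_Bs (Suc n) + scal hbar (rmul (J (F_Bs n)) B)"
    by (simp add: G_Bs_Suc F_Bs_Suc rmul_c_def)
  also have "scal hbar (rmul (J (F_Bs n)) B) =
      (\<Sum>i\<le>n. scal (hbar_coeff (Suc i)) (rmul_Bs (Suc i) (G_Bs (Suc n - Suc i))))"
    by (simp only: Suc J_sum_rmul_Bs_G_Bs rmul_sum rmul_scal scal_sum_right scal_scal
        rmul_Bs_Suc[symmetric] hbar_coeff_Suc diff_Suc_Suc)
  also have "G_Bs (Suc n) + \<dots> = (\<Sum>i\<le>Suc n. scal (hbar_coeff i) (rmul_Bs i (G_Bs (Suc n - i))))"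
    by (simp only: sum.atMost_Suc_shift) simp
  finally show ?case .
qed simp

lemma sh_shpow_g_1_shpow_e_1:
  assumes "j \<le> s"
  shows "sh (shpow (g 1) j) (shpow (e 1) (s - j)) =
     (\<Sum>i\<le>s - j. scal (of_nat (fact j * fact (s - j) * ((s - i) choose j)) * hbar_coeff i)
        (rmul_Bs i (G_Bs (s - i))))"
proof -
  have "sh (shpow (g 1) j) (shpow (e 1) (s - j)) =
      scal (of_nat (fact j) * of_nat (fact (s - j))) (sh (G_Bs j) (F_Bs (s - j)))"
    by (simp only: shpow_g_1 shpow_e_1 sh_scal_left sh_scal_right scal_scal ac_simps)
  also have "\<dots> = scal (of_nat (fact j) * of_nat (fact (s - j)))
      (\<Sum>i\<le>s - j. scal (hbar_coeff i) (rmul_Bs i (sh (G_Bs j) (G_Bs (s - j - i)))))"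
    by (simp only: F_Bs_expansion sh_sum_right sh_scal_right sh_rmul_Bs_right)
  also have "\<dots> = (\<Sum>i\<le>s - j. scal (of_nat (fact j * fact (s - j) * ((s - i) choose j)) * hbar_coeff i)
        (rmul_Bs i (G_Bs (s - i))))"
    unfolding scal_sum_right
  proof (rule sum.cong[OF refl])
    fix i
    assume "i \<in> {..s - j}"
    then have i: "j + (s - j - i) = s - i"
      using assms by auto
    show "scal (of_nat (fact j) * of_nat (fact (s - j)))
            (scal (hbar_coeff i) (rmul_Bs i (sh (G_Bs j) (G_Bs (s - j - i))))) =
          scal (of_nat (fact j * fact (s - j) * ((s - i) choose j)) * hbar_coeff i)
            (rmul_Bs i (G_Bs (s - i)))"
      by (simp only: sh_G_Bs i rmul_Bs_scal scal_scal) (simp add: ac_simps)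
  qed
  finally show ?thesis .
qed

lemma E1_coeff_sum:
  assumes "i \<le> s"
  shows "(\<Sum>j\<le>s - i. [: 1 / of_nat (fact (s + 1)) :] *
            (of_nat (fact j * fact (s - j) * ((s - i) choose j)) * hbar_coeff i))
         = hbar_coeff i * [: 1 / of_nat (i + 1) :]"
proof -
  define N where "N = (\<Sum>j\<le>s - i. fact j * fact (s - j) * ((s - i) choose j) :: nat)"
  have N: "(i + 1) * N = fact (s + 1)"
    unfolding N_def by (rule sum_fact_choose[OF assms])
  have ratio: "(1 / of_nat (fact (s + 1)) :: rat) * of_nat N = 1 / of_nat (i + 1)"
  proof -
    have "(of_nat (fact (s + 1)) :: rat) = of_nat (i + 1) * of_nat N"
      by (simp only: N[symmetric] of_nat_mult)
    moreover have "N \<noteq> 0"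
      using N fact_nonzero[of "s + 1"] by (metis mult_0_right)
    then have "(of_nat (i + 1) :: rat) * of_nat N \<noteq> 0"
      by simp
    ultimately show ?thesis
      by (simp add: field_simps)
  qed
  have const_mult: "[:x:] * [:y:] = [:x * y:]" for x y :: rat
    by simp
  have "(\<Sum>j\<le>s - i. [: 1 / of_nat (fact (s + 1)) :] *
            (of_nat (fact j * fact (s - j) * ((s - i) choose j)) * hbar_coeff i))
      = [: 1 / of_nat (fact (s + 1)) :] * (of_nat N * hbar_coeff i)"
    by (simp only: N_def sum_distrib_left[symmetric] sum_distrib_right[symmetric] of_nat_sum)
  also have "\<dots> = [: 1 / of_nat (fact (s + 1)) * of_nat N :] * hbar_coeff i"
    by (simp only: of_nat_poly mult.assoc[symmetric] const_mult)
  also have "\<dots> = [: 1 / of_nat (i + 1) :] * hbar_coeff i"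
    by (simp only: ratio)
  also have "\<dots> = hbar_coeff i * [: 1 / of_nat (i + 1) :]"
    by (rule mult.commute)
  finally show ?thesis .
qed

theorem E1_eq_J_F_Bs: "E1 s = J (F_Bs s)"
proof -
  let ?T = "\<lambda>i. rmul_Bs i (G_Bs (s - i))"
  let ?c = "\<lambda>j i. [: 1 / of_nat (fact (s + 1)) :] *
              (of_nat (fact j * fact (s - j) * ((s - i) choose j)) * hbar_coeff i)"
  have "E1 s = scal [: 1 / of_nat (fact (s + 1)) :]
     (\<Sum>j\<le>s. \<Sum>i\<le>s - j. scal (of_nat (fact j * fact (s - j) * ((s - i) choose j)) * hbar_coeff i) (?T i))"
    unfolding E1_def
    by (rule arg_cong[where f="scal _"], rule sum.cong[OF refl], rule sh_shpow_g_1_shpow_e_1) simp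
  also have "\<dots> = (\<Sum>j\<le>s. \<Sum>i\<le>s - j. scal (?c j i) (?T i))"
    by (simp only: scal_sum_right scal_scal)
  also have "\<dots> = (\<Sum>i\<le>s. scal (\<Sum>j\<le>s - i. ?c j i) (?T i))"
    by (subst sum_triangle_swap) (simp only: scal_sum_left)
  also have "\<dots> = (\<Sum>i\<le>s. scal (hbar_coeff i * [: 1 / of_nat (i + 1) :]) (?T i))"
    by (rule sum.cong[OF refl]) (simp only: E1_coeff_sum atMost_iff)
  also have "\<dots> = J (F_Bs s)"
    by (simp only: F_Bs_expansion J_sum_rmul_Bs_G_Bs)
  finally show ?thesis .
qed

section \<open>Indices as words\<close>

fun index_word :: "nat list \<Rightarrow> letter list" where
  "index_word [] = []"
| "index_word (k # ks) = (B # replicate (k - 1) A) @ index_word ks"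

definition starts_B :: "letter list \<Rightarrow> bool" where
  "starts_B w \<longleftrightarrow> w = [] \<or> hd w = B"

definition ends_A :: "letter list \<Rightarrow> bool" where
  "ends_A w \<longleftrightarrow> w = [] \<or> last w = A"

lemma F_word_append:
  assumes "no_trailing_B (F_word u)"
  shows "F_word (u @ v) = ncmult (F_word u) (F_word v)"
proof (induction v rule: rev_induct)
  case (snoc x v)
  have "rmul_c (ncmult p q) = ncmult p (rmul_c q)" for p q
    by (simp only: ncmult_c[symmetric] ncmult_assoc)
  with snoc show ?case
    by (cases x) (simp_all only: append_assoc[symmetric] F_word_snoc_A F_word_snoc_B rmul_ncmult
        J_ncmult[OF assms])
qed (simp flip: nc_one_def)

lemma F_word_append_replicate_A: "F_word (u @ replicate n A) = ncmult (F_word u) (word (replicate n A))"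
proof (induction n)
  case (Suc n)
  then show ?case
    by (simp only: replicate_Suc_snoc append_assoc[symmetric] F_word_snoc_A rmul_ncmult rmul_word)
qed (simp flip: nc_one_def)

lemma no_trailing_B_F_word: "ends_A w \<Longrightarrow> no_trailing_B (F_word w)"
  unfolding ends_A_def
  by (metis F_word_Nil append_butlast_last_id no_trailing_B_F_word_snoc_A no_trailing_B_word
      nc_one_def trailing_Bs_Nil)

lemma Eaux_eq_J_F_word: "is_index ks \<Longrightarrow> Eaux s ks = J (F_word (replicate s B @ index_word ks))"
proof (induction ks arbitrary: s)
  case Nil
  then show ?case
    by (simp add: E1_eq_J_F_Bs F_Bs_def)
next
  case (Cons k ks)
  have k: "0 < k" and ks: "is_index ks"
    using Cons.prems by (auto simp: is_index_def)
  show ?case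
  proof (cases "k = 1")
    case True
    then show ?thesis
      using Cons.IH[OF ks, of "Suc s"] by (simp add: replicate_app_Cons_same)
  next
    case False
    then have k_pred: "k - 1 = Suc (k - 2)"
      using k by simp
    let ?u = "replicate (Suc s) B @ replicate (k - 1) A"
    have no_B: "no_trailing_B (F_word ?u)"
      by (simp only: k_pred replicate_Suc_snoc[of "k - 2"] append_assoc[symmetric]
          no_trailing_B_F_word_snoc_A)
    have "J (F_word (replicate s B @ index_word (k # ks))) = J (F_word (?u @ index_word ks))"
      by (simp add: replicate_app_Cons_same)
    also have "\<dots> = ncmult (F_word ?u) (J (F_word (index_word ks)))"
      by (simp only: F_word_append[OF no_B] J_ncmult[OF no_B])
    also have "\<dots> = ncmult (ncmult (E1 s) (e k)) (Eaux 0 ks)"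
      by (simp only: F_word_append_replicate_A F_Bs_def[symmetric] F_Bs_Suc E1_eq_J_F_Bs e_def
          ncmult_c[symmetric] rmul_def ncmult_assoc Cons.IH[OF ks, of 0] replicate_0 append_Nil)
    finally show ?thesis
      using False by simp
  qed
qed

lemma Eidx_eq_J_F_word: "is_index ks \<Longrightarrow> Eidx ks = J (F_word (index_word ks))"
  by (simp add: Eidx_def Eaux_eq_J_F_word)

lemma starts_B_index_word: "starts_B (index_word ks)"
  by (cases ks) (auto simp: starts_B_def)

lemma index_word_eq_Nil_iff: "is_index ks \<Longrightarrow> index_word ks = [] \<longleftrightarrow> ks = []"
  by (cases ks) auto

lemma ends_A_index_word: "admissible ks \<Longrightarrow> ends_A (index_word ks)"
proof (induction ks)
  case (Cons k ks)
  show ?case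
  proof (cases "ks = []")
    case True
    then show ?thesis
      using Cons.prems by (auto simp: admissible_def ends_A_def)
  next
    case False
    then have "admissible ks"
      using Cons.prems by (simp add: admissible_def is_index_def)
    with False show ?thesis
      using Cons.IH index_word_eq_Nil_iff by (auto simp: admissible_def ends_A_def)
  qed
qed (simp add: ends_A_def)

lemma replicate_A_prefixE:
  obtains n r where "w = replicate n A @ r" "starts_B r"
proof -
  define r where "r = dropWhile (\<lambda>y. y = A) w"
  have "takeWhile (\<lambda>y. y = A) w = replicate (length (takeWhile (\<lambda>y. y = A) w)) A"
    by (metis (mono_tags) replicate_length_same set_takeWhileD)
  then have "w = replicate (length (takeWhile (\<lambda>y. y = A) w)) A @ r"
    unfolding r_def by (metis takeWhile_dropWhile_id)
  moreover have "starts_B r"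
  proof (cases r)
    case (Cons y ys)
    then have "y \<noteq> A"
      using hd_dropWhile[of "\<lambda>y. y = A" w] unfolding r_def by auto
    with Cons show ?thesis
      by (cases y) (auto simp: starts_B_def)
  qed (simp add: starts_B_def)
  ultimately show ?thesis
    using that by blast
qed

lemma index_word_surj:
  "starts_B w \<Longrightarrow> \<exists>ks. is_index ks \<and> index_word ks = w \<and> (ends_A w \<longrightarrow> admissible ks)"
proof (induction "length w" arbitrary: w rule: less_induct)
  case less
  show ?case
  proof (cases w)
    case Nil
    then show ?thesis
      by (intro exI[of _ "[]"]) (simp add: is_index_def admissible_def)
  next
    case (Cons x rest)
    obtain n r where rest: "rest = replicate n A @ r" and "starts_B r"
      by (rule replicate_A_prefixE)
    moreover have w: "w = B # replicate n A @ r"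
      using Cons less.prems rest by (simp add: starts_B_def)
    moreover have "length r < length w"
      using w by simp
    ultimately obtain ks where ks: "is_index ks" "index_word ks = r" "ends_A r \<longrightarrow> admissible ks"
      using less.hyps by blast
    have "is_index (Suc n # ks)"
      using ks(1) by (simp add: is_index_def)
    moreover have "index_word (Suc n # ks) = w"
      using w ks(2) by simp
    moreover have "admissible (Suc n # ks)" if "ends_A w"
    proof (cases "ks = []")
      case True
      then show ?thesis
        using that w ks(2) by (cases n) (auto simp: admissible_def is_index_def ends_A_def)
    next
      case False
      then have "ends_A r"
        using that w ks index_word_eq_Nil_iff by (auto simp: ends_A_def)
      then show ?thesis
        using False ks by (auto simp: admissible_def is_index_def)
    qed
    ultimately show ?thesis
      by blast
  qed
qed

section \<open>Words occurring in a quasi-shuffle\<close>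

lemma keys_rmul: "Poly_Mapping.keys (rmul p x) \<subseteq> (\<lambda>w. w @ [x]) ` Poly_Mapping.keys p"
proof -
  have "rmul p x = (\<Sum>u\<in>Poly_Mapping.keys p. Poly_Mapping.single (u @ [x]) (Poly_Mapping.lookup p u))"
    by (simp add: rmul_eq_lin lin_def scal_word)
  then show ?thesis
    using keys_sum[of "\<lambda>u. Poly_Mapping.single (u @ [x]) (Poly_Mapping.lookup p u)" "Poly_Mapping.keys p"]
    by (auto split: if_splits)
qed

lemma keys_word [simp]: "Poly_Mapping.keys (word u) = {u}"
  by (simp add: word_def)

lemma keys_qshw_snoc_snocE:
  assumes "w \<in> Poly_Mapping.keys (qshw (u @ [x]) (v @ [y]))"
  obtains (left) w' where "w = w' @ [x]" "w' \<in> Poly_Mapping.keys (qshw u (v @ [y]))"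
  | (right) w' where "w = w' @ [y]" "w' \<in> Poly_Mapping.keys (qshw (u @ [x]) v)"
  | (contraction) w' where "x = A" "y = A" "w = w' @ [A]" "w' \<in> Poly_Mapping.keys (qshw u v)"
proof -
  let ?p = "rmul (qshw u (v @ [y])) x" and ?q = "rmul (qshw (u @ [x]) v) y"
    and ?r = "if x = A \<and> y = A then scal hbar (rmul (qshw u v) A) else 0"
  have "w \<in> Poly_Mapping.keys ?p \<union> Poly_Mapping.keys ?q \<union> Poly_Mapping.keys ?r"
    using assms keys_add[of "?p + ?q" ?r] keys_add[of ?p ?q] by (auto simp: qshw_snoc_snoc)
  moreover have "Poly_Mapping.keys ?r \<subseteq> (if x = A \<and> y = A then Poly_Mapping.keys (rmul (qshw u v) A) else {})"
    using keys_scal_subset by auto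
  ultimately consider "w \<in> Poly_Mapping.keys ?p" | "w \<in> Poly_Mapping.keys ?q"
    | "x = A" "y = A" "w \<in> Poly_Mapping.keys (rmul (qshw u v) A)"
    by (auto split: if_splits)
  then show ?thesis
    by cases (use that keys_rmul in blast)+
qed

lemma keys_qshw_length:
  "w \<in> Poly_Mapping.keys (qshw u v) \<Longrightarrow> length u \<le> length w \<and> length v \<le> length w"
proof (induction "length u + length v" arbitrary: u v w rule: less_induct)
  case less
  show ?case
  proof (cases "u = [] \<or> v = []")
    case False
    then obtain u' x v' y where u: "u = u' @ [x]" and v: "v = v' @ [y]"
      by (metis rev_exhaust)
    from less.prems[unfolded u v] show ?thesis
    proof (cases rule: keys_qshw_snoc_snocE)
      case (left w')
      then show ?thesis
        using less.hyps[of u' "v' @ [y]" w'] u v by simp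
    next
      case (right w')
      then show ?thesis
        using less.hyps[of "u' @ [x]" v' w'] u v by simp
    next
      case (contraction w')
      then show ?thesis
        using less.hyps[of u' v' w'] u v by simp
    qed
  qed (use less.prems in auto)
qed

lemma starts_B_snoc: "w \<noteq> [] \<Longrightarrow> starts_B (w @ [x]) \<longleftrightarrow> starts_B w"
  by (cases w) (auto simp: starts_B_def)

lemma keys_qshw_starts_B:
  "w \<in> Poly_Mapping.keys (qshw u v) \<Longrightarrow> starts_B u \<Longrightarrow> starts_B v \<Longrightarrow> starts_B w"
proof (induction "length u + length v" arbitrary: u v w rule: less_induct)
  case less
  show ?case
  proof (cases "u = [] \<or> v = []")
    case False
    then obtain u' x v' y where u: "u = u' @ [x]" and v: "v = v' @ [y]"
      by (metis rev_exhaust)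
    have su: "starts_B u'" and sv: "starts_B v'"
      using less.prems(2,3) by (cases u'; cases v'; simp add: u v starts_B_def)+
    from less.prems(1)[unfolded u v] show ?thesis
    proof (cases rule: keys_qshw_snoc_snocE)
      case (left w')
      then have "starts_B w'" "length (v' @ [y]) \<le> length w'"
        using less.hyps[of u' "v' @ [y]" w'] less.prems(3) su keys_qshw_length[OF left(2)] u v by simp_all
      then show ?thesis
        using left starts_B_snoc[of w' x] by (cases w') auto
    next
      case (right w')
      then have "starts_B w'" "length (u' @ [x]) \<le> length w'"
        using less.hyps[of "u' @ [x]" v' w'] less.prems(2) sv keys_qshw_length[OF right(2)] u v by simp_all
      then show ?thesis
        using right starts_B_snoc[of w' y] by (cases w') auto
    next
      case (contraction w')
      then have "u' \<noteq> []"
        using less.prems(2) u by (auto simp: starts_B_def)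
      with contraction have "starts_B w'" "w' \<noteq> []"
        using less.hyps[of u' v' w'] su sv keys_qshw_length[of w' u' v'] u v by auto
      then show ?thesis
        using contraction starts_B_snoc by auto
    qed
  qed (use less.prems in auto)
qed

lemma keys_qshw_ends_A:
  assumes "w \<in> Poly_Mapping.keys (qshw u v)" "ends_A u" "ends_A v"
  shows "ends_A w"
proof (cases "u = [] \<or> v = []")
  case False
  then obtain u' x v' y where u: "u = u' @ [x]" and v: "v = v' @ [y]"
    by (metis rev_exhaust)
  from assms(1) show ?thesis
    unfolding u v by (cases rule: keys_qshw_snoc_snocE) (use assms(2,3) u v in \<open>auto simp: ends_A_def\<close>)
qed (use assms in auto)

section \<open>The shuffle product of two \<open>E\<close>'s\<close>

lemma lin_J_F_word_in_E_span:
  assumes "\<And>w. w \<in> Poly_Mapping.keys p \<Longrightarrow> \<exists>ks\<in>S. is_index ks \<and> index_word ks = w"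
  shows "lin (\<lambda>w. J (F_word w)) p \<in> E_span S"
proof -
  define d where "d w = (SOME ks. ks \<in> S \<and> is_index ks \<and> index_word ks = w)" for w
  have d: "d w \<in> S \<and> is_index (d w) \<and> index_word (d w) = w" if "w \<in> Poly_Mapping.keys p" for w
    unfolding d_def using someI_ex[OF assms[OF that, unfolded Bex_def]] .
  have inj: "inj_on d (Poly_Mapping.keys p)"
    by (rule inj_on_inverseI[where g=index_word]) (use d in blast)
  let ?c = "\<lambda>ks. Poly_Mapping.lookup p (index_word ks)"
  have "(\<Sum>ks\<in>d ` Poly_Mapping.keys p. scal (?c ks) (Eidx ks)) = lin (\<lambda>w. J (F_word w)) p"
    unfolding lin_def sum.reindex[OF inj] by (rule sum.cong) (simp_all add: d Eidx_eq_J_F_word)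
  moreover have "d ` Poly_Mapping.keys p \<subseteq> S"
    using d by auto
  ultimately show ?thesis
    unfolding E_span_def mem_Collect_eq
    by (intro exI[of _ "d ` Poly_Mapping.keys p"] exI[of _ ?c]) simp
qed

lemma sh_Eidx_eq_lin:
  assumes "is_index k" "is_index l" "admissible k \<or> admissible l"
  shows "sh (Eidx k) (Eidx l) = lin (\<lambda>w. J (F_word w)) (qshw (index_word k) (index_word l))"
proof -
  have "sh (Eidx k) (Eidx l) = J (F (qshw (index_word k) (index_word l)))"
    using assms(3)
  proof
    assume "admissible k"
    then have "no_trailing_B (F_word (index_word k))"
      by (simp add: ends_A_index_word no_trailing_B_F_word)
    then show ?thesis
      using assms(1,2) by (simp add: Eidx_eq_J_F_word J_no_trailing_B J_sh_left flip: sh_F_word)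
  next
    assume "admissible l"
    then have "no_trailing_B (F_word (index_word l))"
      by (simp add: ends_A_index_word no_trailing_B_F_word)
    then show ?thesis
      using assms(1,2) by (simp add: Eidx_eq_J_F_word J_no_trailing_B J_sh_right flip: sh_F_word)
  qed
  then show ?thesis
    by (simp add: F_def lin_linear_nc[OF linear_nc_J_op])
qed

theorem proposition6p4:
  fixes k l :: "nat list"
  assumes "is_index k" and "is_index l"
  shows "((admissible k \<or> admissible l) \<longrightarrow> sh (Eidx k) (Eidx l) \<in> frak_e)
       \<and> ((admissible k \<and> admissible l) \<longrightarrow> sh (Eidx k) (Eidx l) \<in> frak_e0)"
proof -
  let ?p = "qshw (index_word k) (index_word l)"
  have "starts_B w" if "w \<in> Poly_Mapping.keys ?p" for w
    using keys_qshw_starts_B[OF that starts_B_index_word starts_B_index_word] .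
  then have in_e: "lin (\<lambda>w. J (F_word w)) ?p \<in> frak_e"
    unfolding frak_e_def by (intro lin_J_F_word_in_E_span) (use index_word_surj in blast)
  have "starts_B w \<and> ends_A w" if "w \<in> Poly_Mapping.keys ?p" "admissible k" "admissible l" for w
    using keys_qshw_starts_B[OF that(1) starts_B_index_word starts_B_index_word]
      keys_qshw_ends_A[OF that(1) ends_A_index_word[OF that(2)] ends_A_index_word[OF that(3)]] by blast
  then have in_e0: "lin (\<lambda>w. J (F_word w)) ?p \<in> frak_e0" if "admissible k" "admissible l"
    unfolding frak_e0_def using that by (intro lin_J_F_word_in_E_span) (use index_word_surj in blast)
  show ?thesis
    using sh_Eidx_eq_lin[OF assms] in_e in_e0 by auto
qed

end
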